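(* For every $\varepsilon>0$ and $n\in\mathbb{N}$ there exists $N\in\mathbb{N}$ such that the following holds for every $N$-partitioned hypergraph $H$ and every choice of vertices $\gamma_{ik},\gamma^1_{ik},\gamma^2_{ik}\in V_{ik}$, $i<k$, $i,k\in[N]$. For $i<j<k<\ell$ in $[N]$ let $A_{ijk\ell}\subseteq V_{jk}$ be the set of left neighbors of $\gamma_{j\ell}$ in the $(j,k,\ell)$-triad, $B_{ijk\ell}\subseteq V_{jk}$ the set of right neighbors of $\gamma_{ik}$ in the $(i,j,k)$-triad, and $X_{ijk\ell}=V_{jk}\setminus(A_{ijk\ell}\cup B_{ijk\ell})$; define $A^1_{ijk\ell},B^1_{ijk\ell},X^1_{ijk\ell}$ in the same way with $\gamma^1$ in place of $\gamma$, and $A^2_{ijk\ell},B^2_{ijk\ell},X^2_{ijk\ell}$ with $\gamma^2$ in place of $\gamma$. Then there exist an induced $n$-partitioned subhypergraph $H_0$ of $H$ with index set $I$ and reals $d_{\kappa\kappa^1\kappa^2}\in[0,1]$, indexed by $\kappa,\kappa^1,\kappa^2\in\{A,B,X\}$, such that $$\left|\frac{|\kappa_{ijk\ell}\cap(\kappa^1)^1_{ijk\ell}\cap(\kappa^2)^2_{ijk\ell}|}{|V_{jk}|}-d_{\kappa\kappa^1\kappa^2}\right|\le\varepsilon$$ for all $\kappa,\kappa^1,\kappa^2\in\{A,B,X\}$ and all $i<j<k<\ell$ in $I$ (where $\kappa_{ijk\ell}$ denotes $A_{ijk\ell}$, $B_{ijk\ell}$ or $X_{ijk\ell}$ according to $\kappa$,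 and similarly for the superscripted sets). Moreover, if for all $i<j<k<\ell$ the sets $A_{ijk\ell}$ and $B_{ijk\ell}$ are disjoint, $A^1_{ijk\ell}$ and $B^1_{ijk\ell}$ are disjoint, and $A^2_{ijk\ell}$ and $B^2_{ijk\ell}$ are disjoint, then $\sum_{\kappa,\kappa^1,\kappa^2\in\{A,B,X\}}d_{\kappa\kappa^1\kappa^2}\le 1+27\varepsilon$.
   Context: An $n$-partitioned hypergraph $H$ is a finite $3$-uniform hypergraph whose vertex set is partitioned into nonempty sets $V_{ij}$, $1\le i<j\le n$, such that every edge has, for some $1\le i<j<k\le n$, exactly one vertex in each of $V_{ij}$, $V_{ik}$, $V_{jk}$; the set of such edges is the $(i,j,k)$-triad. For $v\in V_{ik}$, a left neighbor (right neighbor) of $v$ in the $(i,j,k)$-triad is a vertex of $V_{ij}$ (of $V_{jk}$) contained together with $v$ in an edge of that triad. For $I\subseteq[n]$, the induced subhypergraph with index set $I$ is the $|I|$-partitioned hypergraph with parts $V_{ij}$, $i<j$, $i,j\in I$ (indexed by elements of $I$) and all edges of $H$ inside these parts. *)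

theory Defs
  imports Complex_Main
begin

text \<open>The vertex set of the hypergraph is the union of the parts.\<close>

definition partitioned_hg :: "nat \<Rightarrow> (nat \<Rightarrow> nat \<Rightarrow> nat set) \<Rightarrow> nat set set \<Rightarrow> bool" where
  "partitioned_hg N V E \<longleftrightarrow>
     (\<forall>i j. 1 \<le> i \<and> i < j \<and> j \<le> N \<longrightarrow> finite (V i j) \<and> V i j \<noteq> {}) \<and>
     (\<forall>i j i' j'. 1 \<le> i \<and> i < j \<and> j \<le> N \<and> 1 \<le> i' \<and> i' < j' \<and> j' \<le> N \<and> (i, j) \<noteq> (i', j')
        \<longrightarrow> V i j \<inter> V i' j' = {}) \<and>
     (\<forall>e\<in>E. \<exists>i j k. 1 \<le> i \<and> i < j \<and> j < k \<and> k \<le> N \<and>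
        (\<exists>x\<in>V i j. \<exists>y\<in>V i k. \<exists>z\<in>V j k. e = {x, y, z}))"

definition left_nbrs :: "(nat \<Rightarrow> nat \<Rightarrow> nat set) \<Rightarrow> nat set set \<Rightarrow> nat \<Rightarrow> nat \<Rightarrow> nat \<Rightarrow> nat \<Rightarrow> nat set" where
  "left_nbrs V E i j k v = {u \<in> V i j. \<exists>w \<in> V j k. {u, v, w} \<in> E}"

definition right_nbrs :: "(nat \<Rightarrow> nat \<Rightarrow> nat set) \<Rightarrow> nat set set \<Rightarrow> nat \<Rightarrow> nat \<Rightarrow> nat \<Rightarrow> nat \<Rightarrow> nat set" where
  "right_nbrs V E i j k v = {w \<in> V j k. \<exists>u \<in> V i j. {u, v, w} \<in> E}"

datatype kappa = KA | KB | KX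

definition Kappas :: "kappa set" where
  "Kappas = {KA, KB, KX}"

definition kset :: "(nat \<Rightarrow> nat \<Rightarrow> nat set) \<Rightarrow> nat set set \<Rightarrow> (nat \<Rightarrow> nat \<Rightarrow> nat) \<Rightarrow> kappa
                     \<Rightarrow> nat \<Rightarrow> nat \<Rightarrow> nat \<Rightarrow> nat \<Rightarrow> nat set" where
  "kset V E g K i j k l =
     (let A = left_nbrs V E j k l (g j l);
          B = right_nbrs V E i j k (g i k)
      in case K of KA \<Rightarrow> A | KB \<Rightarrow> B | KX \<Rightarrow> V j k - (A \<union> B))"

end

(*
  Round every density to the grid of multiples of 1/m, where 1/m < \<epsilon>.  The vector of
  the 27 rounded densities of a quadruple i < j < k < l then takes only finitely many values,
  so Ramsey's theorem for 4-uniform hypergraphs gives a large index set on which it is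
  constant; that constant is d.  If A and B are disjoint for each of the three choices of
  vertices, the 27 sets \<kappa> \<inter> \<kappa>\<^sup>1 \<inter> \<kappa>\<^sup>2 partition V_jk, so the densities of one quadruple sum to 1
  and the d's sum to at most 1 + 27\<epsilon>.  Such a quadruple exists because Ramsey's theorem is
  applied to sets of size max 4 n, which are then shrunk to size n.
*)

theory Submission
  imports Defs "HOL-Library.Ramsey"
begin

lemma ramsey_finite_colours:
  assumes "finite C"
  obtains N :: nat where
    "\<And>f. f \<in> [{1..N}]\<^bsup>r\<^esup> \<rightarrow> C \<Longrightarrow> \<exists>H \<in> [{1..N}]\<^bsup>n\<^esup>. \<exists>c \<in> C. f ` [H]\<^bsup>r\<^esup> \<subseteq> {c}"
proof -
  obtain h where h: "bij_betw h C {..<card C}"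
    using ex_bij_betw_finite_nat[OF assms] by (auto simp: atLeast0LessThan)
  obtain N :: nat where N: "partn_lst {..<N} (replicate (card C) n) r"
    using ramsey_full by blast
  have Suc_funcset: "Suc \<in> {..<N} \<rightarrow> {1..N}" by auto
  have "\<exists>H \<in> [{1..N}]\<^bsup>n\<^esup>. \<exists>c \<in> C. f ` [H]\<^bsup>r\<^esup> \<subseteq> {c}" if f: "f \<in> [{1..N}]\<^bsup>r\<^esup> \<rightarrow> C" for f
  proof -
    have "h \<circ> f \<in> [{1..N}]\<^bsup>r\<^esup> \<rightarrow> {..<card C}"
      using f h by (fastforce simp: bij_betw_def)
    then have "h \<circ> f \<circ> image Suc \<in> [{..<N}]\<^bsup>r\<^esup> \<rightarrow> {..<card C}"
      using nsets_compose_image_funcset[OF _ Suc_funcset] by (simp add: comp_def)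
    then obtain i H where i: "i < card C" and H: "H \<in> [{..<N}]\<^bsup>n\<^esup>"
      and mono: "(h \<circ> f \<circ> image Suc) ` [H]\<^bsup>r\<^esup> \<subseteq> {i}"
      by (rule partn_lstE[OF N]) auto
    have SucH: "Suc ` H \<in> [{1..N}]\<^bsup>n\<^esup>"
      using nsets_image_funcset[OF Suc_funcset] H by auto
    moreover have "inv_into C h i \<in> C"
      using h i by (simp add: bij_betw_def inv_into_into)
    moreover have "f Y = inv_into C h i" if Y: "Y \<in> [Suc ` H]\<^bsup>r\<^esup>" for Y
    proof -
      obtain X where X: "X \<in> [H]\<^bsup>r\<^esup>" "Y = Suc ` X"
        using nset_image_obtains[OF Y] by auto
      then have "h (f Y) = i" using mono by auto
      moreover have "Y \<in> [{1..N}]\<^bsup>r\<^esup>"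
        using Y SucH nsets_mono[of "Suc ` H" "{1..N}"] by (auto simp: nsets_def)
      ultimately show ?thesis
        using f h by (metis PiE bij_betw_inv_into_left)
    qed
    ultimately show ?thesis by blast
  qed
  then show thesis using that by blast
qed

lemma nat_floor_grid_approx:
  fixes x :: real and m :: nat
  assumes "x \<in> {0..1}" and "m > 0"
  shows "nat \<lfloor>x * m\<rfloor> \<le> m" and "\<bar>x - nat \<lfloor>x * m\<rfloor> / m\<bar> \<le> 1 / m"
proof -
  have "\<lfloor>x * m\<rfloor> \<le> \<lfloor>real m\<rfloor>"
    using assms by (intro floor_mono) (simp add: mult_left_le_one_le)
  then show "nat \<lfloor>x * m\<rfloor> \<le> m" by simp
  have "0 \<le> x * m - \<lfloor>x * m\<rfloor>" "x * m - \<lfloor>x * m\<rfloor> \<le> 1"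
    by linarith+
  moreover have "x - nat \<lfloor>x * m\<rfloor> / m = (x * m - \<lfloor>x * m\<rfloor>) / m"
    using assms by (simp add: field_simps)
  ultimately show "\<bar>x - nat \<lfloor>x * m\<rfloor> / m\<bar> \<le> 1 / m"
    using assms by (simp add: divide_right_mono)
qed

definition approx_ramsey :: "real \<Rightarrow> 'k set \<Rightarrow> nat \<Rightarrow> nat \<Rightarrow> nat \<Rightarrow> bool" where
  "approx_ramsey \<epsilon> K r n N \<longleftrightarrow>
     (\<forall>F :: nat set \<Rightarrow> 'k \<Rightarrow> real. (\<forall>Q \<in> [{1..N}]\<^bsup>r\<^esup>. \<forall>x \<in> K. F Q x \<in> {0..1}) \<longrightarrow>
        (\<exists>I \<in> [{1..N}]\<^bsup>n\<^esup>. \<exists>d. (\<forall>x \<in> K. d x \<in> {0..1}) \<and>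
           (\<forall>Q \<in> [I]\<^bsup>r\<^esup>. \<forall>x \<in> K. \<bar>F Q x - d x\<bar> \<le> \<epsilon>)))"

lemma ex_approx_ramsey:
  assumes "\<epsilon> > 0" and "finite K"
  shows "\<exists>N. approx_ramsey \<epsilon> K r n N"
proof -
  obtain m :: nat where m: "m > 0" "1 / m < \<epsilon>"
    using ex_inverse_of_nat_less[OF assms(1)] by (auto simp: inverse_eq_divide)
  define C where "C = K \<rightarrow>\<^sub>E {..m}"
  have "finite C"
    using assms(2) by (simp add: C_def finite_PiE)
  then obtain N :: nat
    where N: "\<And>f. f \<in> [{1..N}]\<^bsup>r\<^esup> \<rightarrow> C \<Longrightarrow> \<exists>H \<in> [{1..N}]\<^bsup>n\<^esup>. \<exists>c \<in> C. f ` [H]\<^bsup>r\<^esup> \<subseteq> {c}"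
    using ramsey_finite_colours[where r = r and n = n] by blast
  have "approx_ramsey \<epsilon> K r n N"
    unfolding approx_ramsey_def
  proof (intro allI impI)
    fix F :: "nat set \<Rightarrow> 'a \<Rightarrow> real"
    assume F: "\<forall>Q \<in> [{1..N}]\<^bsup>r\<^esup>. \<forall>x \<in> K. F Q x \<in> {0..1}"
    define colour where "colour Q = restrict (\<lambda>x. nat \<lfloor>F Q x * m\<rfloor>) K" for Q
    have "colour \<in> [{1..N}]\<^bsup>r\<^esup> \<rightarrow> C"
      using F nat_floor_grid_approx(1)[OF _ \<open>m > 0\<close>] by (auto simp: C_def colour_def)
    then obtain I c where I: "I \<in> [{1..N}]\<^bsup>n\<^esup>" and "c \<in> C" and mono: "colour ` [I]\<^bsup>r\<^esup> \<subseteq> {c}"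
      using N by blast
    have "c x / m \<in> {0..1}" if "x \<in> K" for x
      using \<open>c \<in> C\<close> that \<open>m > 0\<close> by (auto simp: C_def)
    moreover have "\<bar>F Q x - c x / m\<bar> \<le> \<epsilon>" if Q: "Q \<in> [I]\<^bsup>r\<^esup>" and "x \<in> K" for Q x
    proof -
      have "Q \<in> [{1..N}]\<^bsup>r\<^esup>"
        using Q I nsets_mono[of I "{1..N}"] by (auto simp: nsets_def)
      then have "F Q x \<in> {0..1}" using F \<open>x \<in> K\<close> by blast
      moreover have "c x = nat \<lfloor>F Q x * m\<rfloor>"
        using mono Q \<open>x \<in> K\<close> by (auto simp: colour_def)
      ultimately show ?thesis
        using nat_floor_grid_approx(2)[OF _ \<open>m > 0\<close>] m(2) by fastforce
    qed
    ultimately show "\<exists>I \<in> [{1..N}]\<^bsup>n\<^esup>. \<exists>d. (\<forall>x \<in> K. d x \<in> {0..1}) \<and>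
        (\<forall>Q \<in> [I]\<^bsup>r\<^esup>. \<forall>x \<in> K. \<bar>F Q x - d x\<bar> \<le> \<epsilon>)"
      using I by (intro bexI[OF _ I] exI[of _ "\<lambda>x. c x / m"]) blast
  qed
  then show ?thesis ..
qed

lemma finite_UNIV_kappa_triples: "finite (UNIV :: (kappa \<times> kappa \<times> kappa) set)"
proof -
  have "(UNIV :: kappa set) = {KA, KB, KX}"
    using kappa.exhaust by blast
  then show ?thesis
    by (metis finite.emptyI finite.insertI finite_Prod_UNIV)
qed

lemma kset_subset: "kset V E g a i j k l \<subseteq> V j k"
  unfolding kset_def left_nbrs_def right_nbrs_def Let_def by (cases a) auto

lemma kset_KX: "kset V E g KX i j k l = V j k - (kset V E g KA i j k l \<union> kset V E g KB i j k l)"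
  unfolding kset_def Let_def by simp

lemma sum_card_Int_kset:
  assumes "finite T" and "T \<subseteq> V j k"
    and "kset V E g KA i j k l \<inter> kset V E g KB i j k l = {}"
  shows "(\<Sum>a\<in>Kappas. card (T \<inter> kset V E g a i j k l)) = card T"
proof -
  have "T = (\<Union>a\<in>Kappas. T \<inter> kset V E g a i j k l)"
    using assms(2) by (auto simp: Kappas_def kset_KX)
  moreover have "card (\<Union>a\<in>Kappas. T \<inter> kset V E g a i j k l) = (\<Sum>a\<in>Kappas. card (T \<inter> kset V E g a i j k l))"
    using assms(1,3) by (intro card_UN_disjoint) (auto simp: Kappas_def kset_KX)
  ultimately show ?thesis by simp
qed

definition kset_density :: "(nat \<Rightarrow> nat \<Rightarrow> nat set) \<Rightarrow> nat set set \<Rightarrow> (nat \<Rightarrow> nat \<Rightarrow> nat)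
    \<Rightarrow> (nat \<Rightarrow> nat \<Rightarrow> nat) \<Rightarrow> (nat \<Rightarrow> nat \<Rightarrow> nat) \<Rightarrow> kappa \<Rightarrow> kappa \<Rightarrow> kappa
    \<Rightarrow> nat \<Rightarrow> nat \<Rightarrow> nat \<Rightarrow> nat \<Rightarrow> real" where
  "kset_density V E g g1 g2 a b c i j k l =
     real (card (kset V E g a i j k l \<inter> kset V E g1 b i j k l \<inter> kset V E g2 c i j k l))
       / real (card (V j k))"

lemma kset_density_bounds: "kset_density V E g g1 g2 a b c i j k l \<in> {0..1}"
proof (cases "finite (V j k)")
  case True
  have "kset V E g a i j k l \<inter> kset V E g1 b i j k l \<inter> kset V E g2 c i j k l \<subseteq> V j k"
    using kset_subset by blast
  then have "card (kset V E g a i j k l \<inter> kset V E g1 b i j k l \<inter> kset V E g2 c i j k l) \<le> card (V j k)"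
    using True by (rule card_mono[rotated])
  then show ?thesis
    by (auto simp: kset_density_def divide_le_eq_1)
qed (simp add: kset_density_def)  \<comment> \<open>an infinite part has card 0, and x / 0 = 0\<close>

lemma sum_kset_density:
  assumes "finite (V j k)" and "V j k \<noteq> {}"
    and "kset V E g KA i j k l \<inter> kset V E g KB i j k l = {}"
    and "kset V E g1 KA i j k l \<inter> kset V E g1 KB i j k l = {}"
    and "kset V E g2 KA i j k l \<inter> kset V E g2 KB i j k l = {}"
  shows "(\<Sum>a\<in>Kappas. \<Sum>b\<in>Kappas. \<Sum>c\<in>Kappas. kset_density V E g g1 g2 a b c i j k l) = 1"
proof -
  let ?K = "\<lambda>a. kset V E g a i j k l" and ?K1 = "\<lambda>b. kset V E g1 b i j k l"
    and ?K2 = "\<lambda>c. kset V E g2 c i j k l"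
  have fin: "finite S" if "S \<subseteq> V j k" for S
    using assms(1) that by (rule finite_subset[rotated])
  have "(\<Sum>a\<in>Kappas. \<Sum>b\<in>Kappas. \<Sum>c\<in>Kappas. card (?K a \<inter> ?K1 b \<inter> ?K2 c))
      = (\<Sum>a\<in>Kappas. \<Sum>b\<in>Kappas. card (?K a \<inter> ?K1 b))"
    using kset_subset by (intro sum.cong refl sum_card_Int_kset assms(5) fin) blast+
  also have "\<dots> = (\<Sum>a\<in>Kappas. card (?K a))"
    using kset_subset by (intro sum.cong refl sum_card_Int_kset assms(4) fin) blast+
  also have "\<dots> = card (V j k)"
    using sum_card_Int_kset[OF assms(1) order.refl assms(3)] kset_subset by (simp add: Int_absorb1)
  finally show ?thesis
    using assms(1,2) by (simp add: kset_density_def flip: sum_divide_distrib of_nat_sum)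
qed

lemma sum_le_of_approx_kset_density:
  assumes "finite (V j k)" and "V j k \<noteq> {}"
    and "kset V E g KA i j k l \<inter> kset V E g KB i j k l = {}"
    and "kset V E g1 KA i j k l \<inter> kset V E g1 KB i j k l = {}"
    and "kset V E g2 KA i j k l \<inter> kset V E g2 KB i j k l = {}"
    and approx: "\<And>a b c. \<bar>kset_density V E g g1 g2 a b c i j k l - d a b c\<bar> \<le> \<epsilon>"
  shows "(\<Sum>a\<in>Kappas. \<Sum>b\<in>Kappas. \<Sum>c\<in>Kappas. d a b c) \<le> 1 + 27 * \<epsilon>"
proof -
  have "(\<Sum>a\<in>Kappas. \<Sum>b\<in>Kappas. \<Sum>c\<in>Kappas. d a b c)
      \<le> (\<Sum>a\<in>Kappas. \<Sum>b\<in>Kappas. \<Sum>c\<in>Kappas. kset_density V E g g1 g2 a b c i j k l + \<epsilon>)"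
    using approx by (intro sum_mono) (simp add: abs_le_iff algebra_simps)
  also have "\<dots> = 1 + 27 * \<epsilon>"
    using sum_kset_density[OF assms(1-5)] by (simp add: sum.distrib Kappas_def)
  finally show ?thesis .
qed

lemma sorted_list_of_set_4:
  assumes "i < j" and "j < k" and "k < l"
  shows "sorted_list_of_set {i, j, k, l} = [i, j, k, l]"
proof -
  have "sorted [i, j, k, l]" and "distinct [i, j, k, l]"
    using assms by auto
  then have "sorted_list_of_set (set [i, j, k, l]) = [i, j, k, l]"
    by (rule sorted_list_of_set.idem_if_sorted_distinct)
  then show ?thesis by (simp only: list.set)
qed

lemma approx_ramsey_kset_densities:
  fixes \<epsilon> :: real
  assumes N: "approx_ramsey \<epsilon> (UNIV :: (kappa \<times> kappa \<times> kappa) set) 4 (max 4 n) N"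
    and hg: "partitioned_hg N V E"
  shows "\<exists>I. I \<subseteq> {1..N} \<and> card I = n \<and>
         (\<exists>d :: kappa \<Rightarrow> kappa \<Rightarrow> kappa \<Rightarrow> real.
            (\<forall>a b c. 0 \<le> d a b c \<and> d a b c \<le> 1) \<and>
            (\<forall>a b c. \<forall>i\<in>I. \<forall>j\<in>I. \<forall>k\<in>I. \<forall>l\<in>I. i < j \<and> j < k \<and> k < l \<longrightarrow>
               \<bar>real (card (kset V E g a i j k l \<inter> kset V E g1 b i j k l \<inter> kset V E g2 c i j k l))
                  / real (card (V j k)) - d a b c\<bar> \<le> \<epsilon>) \<and>
            ((\<forall>i j k l. 1 \<le> i \<and> i < j \<and> j < k \<and> k < l \<and> l \<le> N \<longrightarrow>
                kset V E g KA i j k l \<inter> kset V E g KB i j k l = {} \<and>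
                kset V E g1 KA i j k l \<inter> kset V E g1 KB i j k l = {} \<and>
                kset V E g2 KA i j k l \<inter> kset V E g2 KB i j k l = {})
             \<longrightarrow> (\<Sum>a\<in>Kappas. \<Sum>b\<in>Kappas. \<Sum>c\<in>Kappas. d a b c) \<le> 1 + 27 * \<epsilon>))"
proof -
  define F where "F Q = (\<lambda>(a, b, c). let xs = sorted_list_of_set Q in
    kset_density V E g g1 g2 a b c (xs ! 0) (xs ! 1) (xs ! 2) (xs ! 3))" for Q
  have "\<forall>Q \<in> [{1..N}]\<^bsup>4\<^esup>. \<forall>x \<in> UNIV. F Q x \<in> {0..1}"
    using kset_density_bounds by (simp add: F_def split_beta Let_def)
  then obtain I' d where I': "I' \<in> [{1..N}]\<^bsup>max 4 n\<^esup>"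
    and approx: "\<forall>Q \<in> [I']\<^bsup>4\<^esup>. \<forall>x \<in> UNIV. \<bar>F Q x - d x\<bar> \<le> \<epsilon>"
    and d01: "\<forall>x \<in> UNIV. d x \<in> {0..1}"
    using N[unfolded approx_ramsey_def, THEN spec, THEN mp] by blast
  have quadruple_approx: "\<bar>kset_density V E g g1 g2 a b c i j k l - d (a, b, c)\<bar> \<le> \<epsilon>"
    if "i \<in> I'" "j \<in> I'" "k \<in> I'" "l \<in> I'" "i < j" "j < k" "k < l" for a b c i j k l
  proof -
    have "{i, j, k, l} \<in> [I']\<^bsup>4\<^esup>"
      using that by (auto simp: nsets_def card_insert_if)
    then show ?thesis
      using approx that by (fastforce simp: F_def sorted_list_of_set_4)
  qed
  have "finite I'" "card I' = max 4 n" "I' \<subseteq> {1..N}"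
    using I' by (auto simp: nsets_def)
  then obtain I where "I \<subseteq> I'" "card I = n"
    by (metis max.cobounded2 obtain_subset_with_card_n)
  have "[I']\<^bsup>4\<^esup> \<noteq> {}"
    using \<open>finite I'\<close> \<open>card I' = max 4 n\<close> by (simp add: nsets_eq_empty_iff)
  then obtain i j k l where ijkl: "i \<in> I'" "j \<in> I'" "k \<in> I'" "l \<in> I'" "i < j" "j < k" "k < l"
    unfolding ordered_nsets_4_eq by blast
  have "1 \<le> i" "l \<le> N"
    using ijkl \<open>I' \<subseteq> {1..N}\<close> by auto
  then have "finite (V j k)" "V j k \<noteq> {}"
    using hg ijkl unfolding partitioned_hg_def by (meson le_trans less_imp_le_nat)+
  then have sum_bound: "(\<Sum>a\<in>Kappas. \<Sum>b\<in>Kappas. \<Sum>c\<in>Kappas. d (a, b, c)) \<le> 1 + 27 * \<epsilon>"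
    if "kset V E g KA i j k l \<inter> kset V E g KB i j k l = {}"
      "kset V E g1 KA i j k l \<inter> kset V E g1 KB i j k l = {}"
      "kset V E g2 KA i j k l \<inter> kset V E g2 KB i j k l = {}"
    using that quadruple_approx[OF ijkl] by (rule sum_le_of_approx_kset_density)
  show ?thesis
    using \<open>1 \<le> i\<close> \<open>l \<le> N\<close> \<open>I \<subseteq> I'\<close> \<open>I' \<subseteq> {1..N}\<close> \<open>card I = n\<close> d01 ijkl sum_bound
      quadruple_approx[unfolded kset_density_def]
    by (intro exI[of _ I] exI[of _ "\<lambda>a b c. d (a, b, c)"] conjI impI allI ballI) (auto simp: subset_iff)
qed

theorem lemma6p1:
  "\<forall>(\<epsilon>::real) > 0. \<forall>n::nat. \<exists>N::nat.
     \<forall>V E (g :: nat \<Rightarrow> nat \<Rightarrow> nat) (g1 :: nat \<Rightarrow> nat \<Rightarrow> nat) (g2 :: nat \<Rightarrow> nat \<Rightarrow> nat).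
       partitioned_hg N V E \<and>
       (\<forall>i k. 1 \<le> i \<and> i < k \<and> k \<le> N \<longrightarrow> g i k \<in> V i k \<and> g1 i k \<in> V i k \<and> g2 i k \<in> V i k)
       \<longrightarrow>
       (\<exists>I. I \<subseteq> {1..N} \<and> card I = n \<and>
         (\<exists>d :: kappa \<Rightarrow> kappa \<Rightarrow> kappa \<Rightarrow> real.
            (\<forall>a b c. 0 \<le> d a b c \<and> d a b c \<le> 1) \<and>
            (\<forall>a b c. \<forall>i\<in>I. \<forall>j\<in>I. \<forall>k\<in>I. \<forall>l\<in>I. i < j \<and> j < k \<and> k < l \<longrightarrow>
               \<bar>real (card (kset V E g a i j k l \<inter> kset V E g1 b i j k l \<inter> kset V E g2 c i j k l))
                  / real (card (V j k)) - d a b c\<bar> \<le> \<epsilon>) \<and>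
            ((\<forall>i j k l. 1 \<le> i \<and> i < j \<and> j < k \<and> k < l \<and> l \<le> N \<longrightarrow>
                kset V E g KA i j k l \<inter> kset V E g KB i j k l = {} \<and>
                kset V E g1 KA i j k l \<inter> kset V E g1 KB i j k l = {} \<and>
                kset V E g2 KA i j k l \<inter> kset V E g2 KB i j k l = {})
             \<longrightarrow> (\<Sum>a\<in>Kappas. \<Sum>b\<in>Kappas. \<Sum>c\<in>Kappas. d a b c) \<le> 1 + 27 * \<epsilon>)))"
proof (intro allI impI, goal_cases)
  case (1 \<epsilon> n)
  then obtain N where N: "approx_ramsey \<epsilon> (UNIV :: (kappa \<times> kappa \<times> kappa) set) 4 (max 4 n) N"
    using ex_approx_ramsey finite_UNIV_kappa_triples by blast
  show ?case
    by (intro exI[of _ N] allI impI) (rule approx_ramsey_kset_densities[OF N], blast)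
qed

end
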